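(* Suppose the current syndrome satisfies $\emptyset\ne\sigma\subseteq\{v_1\}\times C_2$ for a fixed $v_1\in V_1$. Let $(c_1,v_2)\in C_1\times V_2$ be a $Z$-type generator whose local view meets the syndrome, $(\Gamma(c_1)\times\Gamma(v_2))\cap\sigma\neq\emptyset$, and let $F\subseteq\mathrm{supp}(c_1,v_2)$ be non-empty with $F\cap(\{v_1\}\times V_2)=\emptyset$. Then $F$ is not flipped by Small-Set-Flip: whenever $\max_{F'\in\mathcal F}\mathrm{score}(F')>0$, one has $\mathrm{score}(F)<\max_{F'\in\mathcal F}\mathrm{score}(F')$.
   Context: Let $G=(V\cup C,E)$ be a connected $(\Delta_V,\Delta_C)$-biregular bipartite graph with $\Delta_V,\Delta_C\ge 2$, $\Gamma(x)$ the neighbourhood of a vertex $x$, and $G_1=(V_1\cup C_1,E_1)$, $G_2=(V_2\cup C_2,E_2)$ two copies of $G$. The hypergraph product code has qubits $Q=V_1\times V_2\sqcup C_1\times C_2$; $X$-type checks indexed by $V_1\times C_2$, check $(v,c)$ acting on $\{v\}\times\Gamma(c)\sqcup\Gamma(v)\times\{c\}$; $Z$-type generators indexed by $C_1\times V_2$, generator $(c,v)$ with support $\mathrm{supp}(c,v)=\Gamma(c)\times\{v\}\sqcup\{c\}\times\Gamma(v)$. The local view of $(c,v)$ is $\Gamma(c)\times\Gamma(v)$. For $F\subseteq Q$, $\sigma(F)$ is the set of checks acting on an odd number of qubits of $F$; $\sigma$ is the current set of unsatisfied checks. $\mathcal F=\{F: F\subseteq\mathrm{supp}(c,v)\text{ for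 some }(c,v)\in C_1\times V_2\}$. For $F\ne\emptyset$, $\mathrm{score}(F)=(|\sigma|-|\sigma\triangle\sigma(F)|)/|F|$, and $\mathrm{score}(\emptyset)=0$. Small-Set-Flip in each iteration flips a set of $\mathcal F$ of maximum score, provided that maximum is positive. *)

theory Defs
  imports Complex_Main
begin

definition nbV :: "('v \<times> 'c) set \<Rightarrow> 'v \<Rightarrow> 'c set" where
  "nbV E v = {c. (v, c) \<in> E}"

definition nbC :: "('v \<times> 'c) set \<Rightarrow> 'c \<Rightarrow> 'v set" where
  "nbC E c = {v. (v, c) \<in> E}"

definition adj :: "('v \<times> 'c) set \<Rightarrow> (('v + 'c) \<times> ('v + 'c)) set" where
  "adj E = {(Inl v, Inr c) | v c. (v, c) \<in> E} \<union> {(Inr c, Inl v) | v c. (v, c) \<in> E}"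

definition biregular_bipartite ::
  "'v set \<Rightarrow> 'c set \<Rightarrow> ('v \<times> 'c) set \<Rightarrow> nat \<Rightarrow> nat \<Rightarrow> bool" where
  "biregular_bipartite V C E dV dC \<longleftrightarrow>
     finite V \<and> finite C \<and> E \<subseteq> V \<times> C \<and>
     (\<forall>v\<in>V. card (nbV E v) = dV) \<and> (\<forall>c\<in>C. card (nbC E c) = dC)"

definition connected_bipartite :: "'v set \<Rightarrow> 'c set \<Rightarrow> ('v \<times> 'c) set \<Rightarrow> bool" where
  "connected_bipartite V C E \<longleftrightarrow>
     (\<forall>x\<in>Inl ` V \<union> Inr ` C. \<forall>y\<in>Inl ` V \<union> Inr ` C. (x, y) \<in> (adj E)\<^sup>*)"

text \<open>Qubits: V1\<times>V2 (Inl) \<sqcup> C1\<times>C2 (Inr).\<close>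
type_synonym ('v, 'c) qubit = "('v \<times> 'v) + ('c \<times> 'c)"

definition qubits :: "'v set \<Rightarrow> 'c set \<Rightarrow> ('v, 'c) qubit set" where
  "qubits V C = Inl ` (V \<times> V) \<union> Inr ` (C \<times> C)"

definition xcheck_supp :: "('v \<times> 'c) set \<Rightarrow> 'v \<Rightarrow> 'c \<Rightarrow> ('v, 'c) qubit set" where
  "xcheck_supp E v c = Inl ` ({v} \<times> nbC E c) \<union> Inr ` (nbV E v \<times> {c})"

definition zgen_supp :: "('v \<times> 'c) set \<Rightarrow> 'c \<Rightarrow> 'v \<Rightarrow> ('v, 'c) qubit set" where
  "zgen_supp E c v = Inl ` (nbC E c \<times> {v}) \<union> Inr ` ({c} \<times> nbV E v)"

definition syndrome ::
  "'v set \<Rightarrow> 'c set \<Rightarrow> ('v \<times> 'c) set \<Rightarrow> ('v, 'c) qubit set \<Rightarrow> ('v \<times> 'c) set" where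
  "syndrome V C E F = {(v, c) \<in> V \<times> C. odd (card (F \<inter> xcheck_supp E v c))}"

definition flip_family :: "'v set \<Rightarrow> 'c set \<Rightarrow> ('v \<times> 'c) set \<Rightarrow> ('v, 'c) qubit set set" where
  "flip_family V C E = {F. \<exists>c\<in>C. \<exists>v\<in>V. F \<subseteq> zgen_supp E c v}"

definition score ::
  "'v set \<Rightarrow> 'c set \<Rightarrow> ('v \<times> 'c) set \<Rightarrow> ('v \<times> 'c) set \<Rightarrow> ('v, 'c) qubit set \<Rightarrow> real" where
  "score V C E \<sigma> F = (if F = {} then 0 else
     (real (card \<sigma>) - real (card ((\<sigma> - syndrome V C E F) \<union> (syndrome V C E F - \<sigma>)))) / real (card F))"

definition max_score ::
  "'v set \<Rightarrow> 'c set \<Rightarrow> ('v \<times> 'c) set \<Rightarrow> ('v \<times> 'c) set \<Rightarrow> real" where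
  "max_score V C E \<sigma> = Max (score V C E \<sigma> ` flip_family V C E)"

end

theory Submission
  imports Defs
begin

text \<open>
  Flipping a set F inside the support of the Z-generator (c1,v2) only changes checks in its local
  view, and there the syndrome of F is the "cross" of its two parts A \<times> {v2} and {c1} \<times> B.
  Since the syndrome lies on the single row v1 and F avoids that row, F removes at most |B|
  unsatisfied checks. For a positive gain F must therefore contain (\<Gamma>(c1) - {v1}) \<times> {v2}
  (otherwise it creates 2|B| syndrome bits), and then it creates at least one bit per neighbour
  of v2. So the gain of F is at most that of the single qubit (v1,v2), while F has at least two
  qubits; its score is thus strictly below the score of that singleton.
\<close>

definition syndrome_reduction :: "('a \<times> 'b) set \<Rightarrow> ('a \<times> 'b) set \<Rightarrow> real" where
  "syndrome_reduction \<sigma> \<tau> = real (card \<sigma>) - real (card ((\<sigma> - \<tau>) \<union> (\<tau> - \<sigma>)))"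

definition local_syndrome :: "'a set \<Rightarrow> 'b set \<Rightarrow> 'a set \<Rightarrow> 'b set \<Rightarrow> ('a \<times> 'b) set" where
  "local_syndrome P Q A B = {(v, c) \<in> P \<times> Q. (v \<in> A) \<noteq> (c \<in> B)}"

lemma syndrome_reduction_eq:
  assumes "finite \<sigma>" "finite \<tau>"
  shows "syndrome_reduction \<sigma> \<tau> = 2 * real (card (\<sigma> \<inter> \<tau>)) - real (card \<tau>)"
proof -
  have "card ((\<sigma> - \<tau>) \<union> (\<tau> - \<sigma>)) = card (\<sigma> - \<tau>) + card (\<tau> - \<sigma>)"
    using assms by (intro card_Un_disjoint) auto
  moreover have "card (\<sigma> - \<tau>) = card \<sigma> - card (\<sigma> \<inter> \<tau>)" "card (\<tau> - \<sigma>) = card \<tau> - card (\<sigma> \<inter> \<tau>)"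
    using assms card_Diff_subset_Int[of \<sigma> \<tau>] card_Diff_subset_Int[of \<tau> \<sigma>] by (auto simp: Int_commute)
  moreover have "card (\<sigma> \<inter> \<tau>) \<le> card \<sigma>" "card (\<sigma> \<inter> \<tau>) \<le> card \<tau>"
    using assms by (auto intro: card_mono)
  ultimately show ?thesis
    unfolding syndrome_reduction_def by (simp add: of_nat_diff)
qed

lemma finite_nbC: "finite E \<Longrightarrow> finite (nbC E c)"
  unfolding nbC_def by (rule finite_subset[of _ "fst ` E"]) force+

lemma finite_nbV: "finite E \<Longrightarrow> finite (nbV E v)"
  unfolding nbV_def by (rule finite_subset[of _ "snd ` E"]) force+

lemma score_eq_syndrome_reduction:
  "F \<noteq> {} \<Longrightarrow> score V C E \<sigma> F = syndrome_reduction \<sigma> (syndrome V C E F) / real (card F)"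
  by (simp add: score_def syndrome_reduction_def)

text \<open>The X-check (v,c) meets supp(c1,v2) exactly in the qubits (v,v2) and (c1,c).\<close>
lemma syndrome_subset_zgen_supp:
  assumes "E \<subseteq> V \<times> C" and "F \<subseteq> zgen_supp E c1 v2"
  shows "syndrome V C E F =
    local_syndrome (nbC E c1) (nbV E v2) {u. Inl (u, v2) \<in> F} {c. Inr (c1, c) \<in> F}"
proof (rule set_eqI, clarify)
  fix v c
  have meet: "F \<inter> xcheck_supp E v c =
      (if (v, c1) \<in> E \<and> (v2, c) \<in> E then F \<inter> {Inl (v, v2), Inr (c1, c)} else {})"
    using assms(2) by (auto simp: xcheck_supp_def zgen_supp_def nbC_def nbV_def)
  have "card (F \<inter> {Inl (v, v2), Inr (c1, c)}) =
      (if Inl (v, v2) \<in> F then 1 else 0) + (if Inr (c1, c) \<in> F then 1 else 0)"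
    by (cases "Inl (v, v2) \<in> F"; cases "Inr (c1, c) \<in> F") (auto simp: Int_insert_right)
  then show "(v, c) \<in> syndrome V C E F \<longleftrightarrow>
      (v, c) \<in> local_syndrome (nbC E c1) (nbV E v2) {u. Inl (u, v2) \<in> F} {c. Inr (c1, c) \<in> F}"
    using assms(1) by (auto simp: syndrome_def local_syndrome_def meet nbC_def nbV_def)
qed

lemma syndrome_singleton_Inl:
  assumes "E \<subseteq> V \<times> C" and "(v1, c1) \<in> E"
  shows "syndrome V C E {Inl (v1, v2)} = {v1} \<times> nbV E v2"
proof -
  have "{Inl (v1, v2)} \<subseteq> zgen_supp E c1 v2"
    using assms(2) by (auto simp: zgen_supp_def nbC_def)
  then show ?thesis
    using assms by (auto simp: syndrome_subset_zgen_supp local_syndrome_def nbC_def)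
qed

context
  fixes P :: "'a set" and Q :: "'b set" and A :: "'a set" and B :: "'b set"
    and \<sigma> :: "('a \<times> 'b) set" and v1 :: 'a
  assumes finite: "finite P" "finite Q" "finite \<sigma>"
    and AB: "A \<subseteq> P" "B \<subseteq> Q"
    and v1: "v1 \<in> P" "v1 \<notin> A"
    and row: "\<sigma> \<subseteq> {v1} \<times> UNIV"
begin

lemma finite_local_syndrome: "finite (local_syndrome P Q A B)"
  using finite by (auto simp: local_syndrome_def intro: finite_subset[of _ "P \<times> Q"])

lemma row_inter_local_syndrome: "\<sigma> \<inter> local_syndrome P Q A B = \<sigma> \<inter> ({v1} \<times> B)"
  using row v1 AB by (auto simp: local_syndrome_def)

lemma row_times_local_syndrome: "{v1} \<times> B \<subseteq> local_syndrome P Q A B"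
  using v1 AB by (auto simp: local_syndrome_def)

lemma card_row_inter_local_syndrome: "card (\<sigma> \<inter> local_syndrome P Q A B) \<le> card B"
proof -
  have "card (\<sigma> \<inter> ({v1} \<times> B)) \<le> card ({v1} \<times> B)"
    using finite AB by (intro card_mono) (auto intro: finite_subset)
  then show ?thesis
    by (simp add: row_inter_local_syndrome card_cartesian_product)
qed

text \<open>A row u \<notin> A of the local view doubles the bits created along B.\<close>
lemma reduction_pos_imp_row_in:
  assumes pos: "syndrome_reduction \<sigma> (local_syndrome P Q A B) > 0"
    and u: "u \<in> P" "u \<noteq> v1"
  shows "u \<in> A"
proof (rule ccontr)
  assume "u \<notin> A"
  then have "{v1} \<times> B \<union> {u} \<times> B \<subseteq> local_syndrome P Q A B"
    using row_times_local_syndrome u AB by (auto simp: local_syndrome_def)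
  then have "card ({v1} \<times> B \<union> {u} \<times> B) \<le> card (local_syndrome P Q A B)"
    using finite_local_syndrome by (rule card_mono[rotated])
  moreover have "card ({v1} \<times> B \<union> {u} \<times> B) = 2 * card B"
    using u finite AB by (subst card_Un_disjoint) (auto intro: finite_subset simp: card_cartesian_product)
  ultimately show False
    using pos card_row_inter_local_syndrome
    by (simp add: syndrome_reduction_eq finite finite_local_syndrome)
qed

lemma reduction_pos_imp_nonempty:
  assumes "syndrome_reduction \<sigma> (local_syndrome P Q A B) > 0"
  shows "B \<noteq> {}"
proof -
  have "card (\<sigma> \<inter> local_syndrome P Q A B) > 0"
    using assms by (simp add: syndrome_reduction_eq finite finite_local_syndrome)
  then show ?thesis
    using card_row_inter_local_syndrome by auto
qed

lemma reduction_le_row_reduction: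
  assumes pos: "syndrome_reduction \<sigma> (local_syndrome P Q A B) > 0"
    and u: "u \<in> P" "u \<noteq> v1"
  shows "syndrome_reduction \<sigma> (local_syndrome P Q A B) \<le> syndrome_reduction \<sigma> ({v1} \<times> Q)"
proof -
  have "u \<in> A"
    using reduction_pos_imp_row_in[OF pos u] .
  then have "{v1} \<times> B \<union> {u} \<times> (Q - B) \<subseteq> local_syndrome P Q A B"
    using row_times_local_syndrome u AB by (auto simp: local_syndrome_def)
  then have "card ({v1} \<times> B \<union> {u} \<times> (Q - B)) \<le> card (local_syndrome P Q A B)"
    using finite_local_syndrome by (rule card_mono[rotated])
  moreover have "card ({v1} \<times> B \<union> {u} \<times> (Q - B)) = card Q"
  proof -
    have "card B \<le> card Q" "finite B"
      using finite AB by (auto intro: card_mono finite_subset)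
    then show ?thesis
      using u finite AB by (subst card_Un_disjoint) (auto simp: card_cartesian_product card_Diff_subset)
  qed
  moreover have "card (\<sigma> \<inter> local_syndrome P Q A B) \<le> card (\<sigma> \<inter> ({v1} \<times> Q))"
    using finite AB by (intro card_mono) (auto simp: row_inter_local_syndrome)
  ultimately show ?thesis
    using finite finite_local_syndrome by (simp add: syndrome_reduction_eq card_cartesian_product)
qed

end

lemma finite_flip_family:
  assumes "finite V" "finite C" "E \<subseteq> V \<times> C"
  shows "finite (flip_family V C E)"
proof -
  have "zgen_supp E c v \<subseteq> qubits V C" if "c \<in> C" "v \<in> V" for c v
    using assms(3) that by (auto simp: zgen_supp_def qubits_def nbC_def nbV_def)
  then have "flip_family V C E \<subseteq> Pow (qubits V C)"
    by (auto simp: flip_family_def)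
  then show ?thesis
    using assms(1,2) by (auto simp: qubits_def intro: finite_subset)
qed

lemma score_le_max_score:
  assumes "finite V" "finite C" "E \<subseteq> V \<times> C" "F \<in> flip_family V C E"
  shows "score V C E \<sigma> F \<le> max_score V C E \<sigma>"
  unfolding max_score_def using assms finite_flip_family by (intro Max_ge finite_imageI) auto

lemma score_lt_singleton_score:
  assumes fin: "finite V" "finite C" "E \<subseteq> V \<times> C" "finite \<sigma>"
    and row: "\<sigma> \<subseteq> {v1} \<times> UNIV"
    and edge: "(v1, c1) \<in> E" and u: "(u, c1) \<in> E" "u \<noteq> v1"
    and F: "F \<subseteq> zgen_supp E c1 v2" "F \<noteq> {}" "Inl (v1, v2) \<notin> F"
    and pos: "score V C E \<sigma> F > 0"
  shows "score V C E \<sigma> F < score V C E \<sigma> {Inl (v1, v2)}"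
proof -
  define A where "A = {u. Inl (u, v2) \<in> F}"
  define B where "B = {c. Inr (c1, c) \<in> F}"
  have nb: "finite (nbC E c1)" "finite (nbV E v2)"
    using fin finite_nbC finite_nbV by (metis finite_SigmaI finite_subset)+
  have AB: "A \<subseteq> nbC E c1" "B \<subseteq> nbV E v2"
    using F(1) by (auto simp: A_def B_def zgen_supp_def)
  have syn: "syndrome V C E F = local_syndrome (nbC E c1) (nbV E v2) A B"
    unfolding A_def B_def using syndrome_subset_zgen_supp[OF fin(3) F(1)] .
  have v1: "v1 \<in> nbC E c1" "v1 \<notin> A" and u': "u \<in> nbC E c1"
    using edge u F(3) by (auto simp: A_def nbC_def)
  have red_pos: "syndrome_reduction \<sigma> (local_syndrome (nbC E c1) (nbV E v2) A B) > 0"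
    using pos F(2) by (simp add: score_eq_syndrome_reduction syn zero_less_divide_iff)
  note local = nb fin(4) AB v1 row
  have "u \<in> A"
    using reduction_pos_imp_row_in[OF local red_pos u' u(2)] .
  moreover obtain c where "c \<in> B"
    using reduction_pos_imp_nonempty[OF local red_pos] by blast
  ultimately have "{Inl (u, v2), Inr (c1, c)} \<subseteq> F"
    by (auto simp: A_def B_def)
  moreover have "finite F"
    using F(1) nb by (auto simp: zgen_supp_def intro: finite_subset)
  ultimately have "card {Inl (u, v2), Inr (c1, c)} \<le> card F"
    by (rule card_mono[rotated])
  then have "card F \<ge> 2"
    by simp
  then have "score V C E \<sigma> F < syndrome_reduction \<sigma> (local_syndrome (nbC E c1) (nbV E v2) A B)"
    using red_pos F(2) by (simp add: score_eq_syndrome_reduction syn divide_less_eq)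
  also have "\<dots> \<le> syndrome_reduction \<sigma> ({v1} \<times> nbV E v2)"
    using reduction_le_row_reduction[OF local red_pos u' u(2)] .
  also have "\<dots> = score V C E \<sigma> {Inl (v1, v2)}"
    by (simp add: score_eq_syndrome_reduction syndrome_singleton_Inl[OF fin(3) edge])
  finally show ?thesis .
qed

theorem claim2:
  fixes V :: "'v set" and C :: "'c set" and E :: "('v \<times> 'c) set"
    and dV dC :: nat and err :: "('v, 'c) qubit set" and \<sigma> :: "('v \<times> 'c) set"
    and v1 v2 :: 'v and c1 :: 'c and F :: "('v, 'c) qubit set"
  assumes G: "biregular_bipartite V C E dV dC"
    and conn: "connected_bipartite V C E"
    and dV: "dV \<ge> 2" and dC: "dC \<ge> 2"
    and err: "err \<subseteq> qubits V C"
    and sigma: "\<sigma> = syndrome V C E err"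
    and sne: "\<sigma> \<noteq> {}"
    and v1: "v1 \<in> V"
    and ssub: "\<sigma> \<subseteq> {v1} \<times> C"
    and c1: "c1 \<in> C" and v2: "v2 \<in> V"
    and view: "(nbC E c1 \<times> nbV E v2) \<inter> \<sigma> \<noteq> {}"
    and Fsub: "F \<subseteq> zgen_supp E c1 v2"
    and Fne: "F \<noteq> {}"
    and Fdisj: "F \<inter> Inl ` ({v1} \<times> V) = {}"
  shows "max_score V C E \<sigma> > 0 \<longrightarrow> score V C E \<sigma> F < max_score V C E \<sigma>"
proof (intro impI)
  assume max_pos: "max_score V C E \<sigma> > 0"
  have fin: "finite V" "finite C" "E \<subseteq> V \<times> C" and deg: "card (nbC E c1) = dC"
    using G c1 by (auto simp: biregular_bipartite_def)
  have "finite \<sigma>"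
    using ssub fin by (auto intro: finite_subset)
  have edge: "(v1, c1) \<in> E"
    using view ssub by (auto simp: nbC_def)
  obtain u where u: "(u, c1) \<in> E" "u \<noteq> v1"
  proof -
    have "card (nbC E c1 - {v1}) > 0"
      using deg dC edge by (simp add: nbC_def)
    then obtain u where "u \<in> nbC E c1 - {v1}"
      by (metis card_gt_0_iff ex_in_conv)
    then show ?thesis
      using that by (auto simp: nbC_def)
  qed
  have "{Inl (v1, v2)} \<in> flip_family V C E"
    using edge c1 v2 by (auto simp: flip_family_def zgen_supp_def nbC_def)
  then have "score V C E \<sigma> {Inl (v1, v2)} \<le> max_score V C E \<sigma>"
    using fin by (rule score_le_max_score[rotated 3])
  moreover have "score V C E \<sigma> F > 0 \<Longrightarrow> score V C E \<sigma> F < score V C E \<sigma> {Inl (v1, v2)}"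
  proof (rule score_lt_singleton_score[OF fin \<open>finite \<sigma>\<close> _ edge u Fsub Fne])
    show "\<sigma> \<subseteq> {v1} \<times> UNIV" "Inl (v1, v2) \<notin> F"
      using ssub Fdisj v2 by auto
  qed
  ultimately show "score V C E \<sigma> F < max_score V C E \<sigma>"
    using max_pos by linarith
qed

end
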